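(* Let $H$ be an $m\times n$ binary parity-check matrix with Tanner graph $G$, let $\underline\gamma\in\mathbb R^n$, and let $\underline x$ be the (unique) optimal solution of the LP decoding problem $\min\{\underline\gamma^T\underline x:\underline x\in\mathscr P\}$, where $\mathscr P$ is the fundamental polytope. Let $F$ be the fractional subgraph of $G$ at $\underline x$, written as the disjoint union of its connected components (clusters) $F_1,\dots,F_K$. Then each cluster $F_i$ contains a cycle.
   Context: The Tanner graph $G$ of $H$ is the bipartite graph with variable nodes $1,\dots,n$, check nodes $1,\dots,m$, and an edge between check $j$ and variable $i$ iff $H_{ji}=1$; $N(j)$ is the set of variable nodes adjacent to check $j$. The fundamental polytope $\mathscr P$ is the set of $\underline x\in[0,1]^n$ such that for every $j$ and every odd-sized $V\subseteq N(j)$, $\sum_{i\in V}x_i-\sum_{i\in N(j)\setminus V}x_i\le |V|-1$. The fractional subgraph $F$ at $\underline x$ is the subgraph of $G$ consisting of the variable nodes $i$ with $0<x_i<1$, the check nodes adjacent to them, and all edges between these nodes. *)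

theory Defs
  imports Complex_Main
begin

text \<open>A binary m x n parity-check matrix is given as H :: nat \<Rightarrow> nat \<Rightarrow> bool,
  where H j i (for j < m, i < n) means H_{ji} = 1. Variable vectors are functions
  nat \<Rightarrow> real, of which only the coordinates 0..<n matter.\<close>

definition check_nbhd :: "nat \<Rightarrow> (nat \<Rightarrow> nat \<Rightarrow> bool) \<Rightarrow> nat \<Rightarrow> nat set" where
  "check_nbhd n H j = {i. i < n \<and> H j i}"

definition fundamental_polytope ::
  "nat \<Rightarrow> nat \<Rightarrow> (nat \<Rightarrow> nat \<Rightarrow> bool) \<Rightarrow> (nat \<Rightarrow> real) set" where
  "fundamental_polytope m n H =
     {x. (\<forall>i<n. 0 \<le> x i \<and> x i \<le> 1) \<and>
         (\<forall>j<m. \<forall>V. V \<subseteq> check_nbhd n H j \<and> odd (card V) \<longrightarrow>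
            (\<Sum>i\<in>V. x i) - (\<Sum>i\<in>check_nbhd n H j - V. x i) \<le> real (card V) - 1)}"

definition objective :: "nat \<Rightarrow> (nat \<Rightarrow> real) \<Rightarrow> (nat \<Rightarrow> real) \<Rightarrow> real" where
  "objective n \<gamma> x = (\<Sum>i<n. \<gamma> i * x i)"

definition unique_LP_optimum ::
  "nat \<Rightarrow> nat \<Rightarrow> (nat \<Rightarrow> nat \<Rightarrow> bool) \<Rightarrow> (nat \<Rightarrow> real) \<Rightarrow> (nat \<Rightarrow> real) \<Rightarrow> bool" where
  "unique_LP_optimum m n H \<gamma> x \<longleftrightarrow>
     x \<in> fundamental_polytope m n H \<and>
     (\<forall>y \<in> fundamental_polytope m n H. objective n \<gamma> x \<le> objective n \<gamma> y) \<and>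
     (\<forall>y \<in> fundamental_polytope m n H.
        objective n \<gamma> y = objective n \<gamma> x \<longrightarrow> (\<forall>i<n. y i = x i))"

text \<open>Tanner graph nodes: Inl i = variable node i, Inr j = check node j.\<close>
type_synonym tnode = "nat + nat"

definition tanner_adj :: "nat \<Rightarrow> nat \<Rightarrow> (nat \<Rightarrow> nat \<Rightarrow> bool) \<Rightarrow> tnode \<Rightarrow> tnode \<Rightarrow> bool" where
  "tanner_adj m n H u v \<longleftrightarrow>
     (\<exists>i j. i < n \<and> j < m \<and> H j i \<and>
        ((u = Inl i \<and> v = Inr j) \<or> (u = Inr j \<and> v = Inl i)))"

definition frac_vertices ::
  "nat \<Rightarrow> nat \<Rightarrow> (nat \<Rightarrow> nat \<Rightarrow> bool) \<Rightarrow> (nat \<Rightarrow> real) \<Rightarrow> tnode set" where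
  "frac_vertices m n H x =
     {Inl i | i. i < n \<and> 0 < x i \<and> x i < 1} \<union>
     {Inr j | j. j < m \<and> (\<exists>i<n. H j i \<and> 0 < x i \<and> x i < 1)}"

definition frac_adj ::
  "nat \<Rightarrow> nat \<Rightarrow> (nat \<Rightarrow> nat \<Rightarrow> bool) \<Rightarrow> (nat \<Rightarrow> real) \<Rightarrow> tnode \<Rightarrow> tnode \<Rightarrow> bool" where
  "frac_adj m n H x u v \<longleftrightarrow>
     u \<in> frac_vertices m n H x \<and> v \<in> frac_vertices m n H x \<and> tanner_adj m n H u v"

definition graph_components :: "'a set \<Rightarrow> ('a \<Rightarrow> 'a \<Rightarrow> bool) \<Rightarrow> 'a set set" where
  "graph_components Vs E = {{v \<in> Vs. E\<^sup>*\<^sup>* u v} | u. u \<in> Vs}"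

definition has_cycle_in :: "('a \<Rightarrow> 'a \<Rightarrow> bool) \<Rightarrow> 'a set \<Rightarrow> bool" where
  "has_cycle_in E C \<longleftrightarrow>
     (\<exists>vs. length vs \<ge> 3 \<and> distinct vs \<and> set vs \<subseteq> C \<and>
        (\<forall>k < length vs - 1. E (vs ! k) (vs ! Suc k)) \<and>
        E (last vs) (hd vs))"

end

theory Submission
  imports Defs
begin

text \<open>
  Suppose a cluster C of the fractional subgraph were a tree. Every check node of C has at least
  two fractional neighbours (an odd-set inequality cannot be tight with a single fractional
  coordinate), and at each check all tight odd sets agree up to complementation on the fractional
  coordinates. Peeling leaves off the tree yields a nonzero direction d, supported on the variables
  of C, that keeps every tight odd-set inequality tight. Then x + t d stays in the fundamental
  polytope for all small t of either sign; optimality forces the objective to be constant along d,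
  and uniqueness of the optimum forces d = 0, a contradiction.
\<close>

section \<open>Leaves of acyclic graphs\<close>

lemma has_cycle_in_mono: "has_cycle_in E W' \<Longrightarrow> W' \<subseteq> W \<Longrightarrow> has_cycle_in E W"
  unfolding has_cycle_in_def by blast

definition path_in :: "('a \<Rightarrow> 'a \<Rightarrow> bool) \<Rightarrow> 'a set \<Rightarrow> 'a list \<Rightarrow> bool" where
  "path_in E W p \<longleftrightarrow> p \<noteq> [] \<and> distinct p \<and> set p \<subseteq> W \<and>
     (\<forall>k < length p - 1. E (p ! k) (p ! Suc k))"

lemma longest_path_in_exists:
  assumes "finite W" and "w \<in> W"
  obtains p where "path_in E W p" and "\<And>q. path_in E W q \<Longrightarrow> length q \<le> length p"
proof -
  have "path_in E W [w]" using assms(2) by (simp add: path_in_def)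
  moreover have "\<forall>q. path_in E W q \<longrightarrow> length q < card W + 1"
    using assms(1) by (auto simp: path_in_def) (metis card_mono distinct_card le_imp_less_Suc)
  ultimately show thesis
    using that Lattices_Big.ex_has_greatest_nat[of "path_in E W" "[w]" length] by blast
qed

lemma path_in_snoc:
  assumes "path_in E W p" and "u \<in> W" and "u \<notin> set p" and "E (last p) u"
  shows "path_in E W (p @ [u])"
  unfolding path_in_def
proof (intro conjI allI impI)
  fix k assume "k < length (p @ [u]) - 1"
  then consider "Suc k < length p" | "k = length p - 1" by fastforce
  then show "E ((p @ [u]) ! k) ((p @ [u]) ! Suc k)"
    by cases (use assms in \<open>auto simp: path_in_def nth_append last_conv_nth\<close>)
qed (use assms in \<open>auto simp: path_in_def\<close>)

lemma path_in_closing_edge: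
  assumes "path_in E W p" and "k + 3 \<le> length p" and "E (last p) (p ! k)"
  shows "has_cycle_in E W"
  unfolding has_cycle_in_def
proof (intro exI conjI)
  show "E (last (drop k p)) (hd (drop k p))"
    using assms by (simp add: hd_drop_conv_nth)
qed (use assms in \<open>auto simp: path_in_def dest: set_drop_subset[THEN subsetD]\<close>)

lemma acyclic_has_leaf:
  assumes "finite W" and "W \<noteq> {}" and irrefl: "\<And>u. \<not> E u u"
    and acyclic: "\<not> has_cycle_in E W"
  shows "\<exists>v\<in>W. \<forall>u1\<in>W. \<forall>u2\<in>W. E v u1 \<longrightarrow> E v u2 \<longrightarrow> u1 = u2"
proof -
  obtain p where p: "path_in E W p" and longest: "\<And>q. path_in E W q \<Longrightarrow> length q \<le> length p"
    using longest_path_in_exists[OF assms(1)] assms(2) by blast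
  define v where "v = last p"
  have p_ne: "p \<noteq> []" and "v \<in> W" using p by (auto simp: path_in_def v_def)
  have last_nth: "p ! (length p - 1) = v" using p_ne by (simp add: v_def last_conv_nth)
  have predecessor: "u = p ! (length p - 2)" if "u \<in> W" and "E v u" for u
  proof -
    have "u \<in> set p"
      using longest[OF path_in_snoc[OF p \<open>u \<in> W\<close>]] \<open>E v u\<close> by (force simp: v_def)
    then obtain k where k: "k < length p" "p ! k = u" by (auto simp: in_set_conv_nth)
    have "k \<noteq> length p - 1" using irrefl \<open>E v u\<close> k last_nth by auto
    moreover have "\<not> k + 3 \<le> length p"
      using path_in_closing_edge[OF p] acyclic \<open>E v u\<close> k by (auto simp: v_def)
    ultimately have "k = length p - 2" using k by arith
    then show ?thesis using k by simp
  qed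
  show ?thesis using \<open>v \<in> W\<close> predecessor by blast
qed

section \<open>Kernels of check equations on forests\<close>

definition check_kernel ::
  "('a \<Rightarrow> 'a \<Rightarrow> bool) \<Rightarrow> ('a \<Rightarrow> 'a \<Rightarrow> real) \<Rightarrow> 'a set \<Rightarrow> 'a set \<Rightarrow> ('a \<Rightarrow> real) \<Rightarrow> bool" where
  "check_kernel E a X Y d \<longleftrightarrow> (\<forall>v. v \<notin> X \<longrightarrow> d v = 0) \<and>
     (\<forall>c\<in>Y. (\<Sum>u | u \<in> X \<and> E c u. a c u * d u) = 0)"

lemma check_kernel_add_pendant:
  assumes ker: "check_kernel E a (X - {v}) (Y - {c}) d" and "finite X" and "v \<in> X"
    and "E c v" and pendant: "\<And>c'. c' \<in> Y \<Longrightarrow> E c' v \<Longrightarrow> c' = c" and "a c v \<noteq> 0"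
  shows "check_kernel E a X Y (d(v := - (\<Sum>u | u \<in> X - {v} \<and> E c u. a c u * d u) / a c v))"
    (is "check_kernel E a X Y ?d")
  unfolding check_kernel_def
proof (intro conjI allI impI ballI)
  fix w assume "w \<notin> X"
  then show "?d w = 0" using ker \<open>v \<in> X\<close> by (auto simp: check_kernel_def)
next
  fix c' assume "c' \<in> Y"
  have agree: "(\<Sum>u | u \<in> X - {v} \<and> E c' u. a c' u * ?d u) = (\<Sum>u | u \<in> X - {v} \<and> E c' u. a c' u * d u)"
    by (rule sum.cong) auto
  show "(\<Sum>u | u \<in> X \<and> E c' u. a c' u * ?d u) = 0"
  proof (cases "c' = c")
    case True
    have "{u. u \<in> X \<and> E c u} = insert v {u. u \<in> X - {v} \<and> E c u}"
      using \<open>v \<in> X\<close> \<open>E c v\<close> by auto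
    then show ?thesis
      using True agree \<open>finite X\<close> \<open>a c v \<noteq> 0\<close> by simp
  next
    case False
    then have "{u. u \<in> X \<and> E c' u} = {u. u \<in> X - {v} \<and> E c' u}"
      using pendant \<open>c' \<in> Y\<close> by auto
    then show ?thesis
      using agree ker False \<open>c' \<in> Y\<close> by (simp add: check_kernel_def)
  qed
qed

lemma forest_check_kernel_nontrivial:
  assumes "finite X" and "finite Y" and "X \<noteq> {}"
    and sym: "\<And>u v. E u v \<Longrightarrow> E v u" and irrefl: "\<And>u. \<not> E u u"
    and two_nbrs: "\<And>c. c \<in> Y \<Longrightarrow> \<exists>u1\<in>X. \<exists>u2\<in>X. u1 \<noteq> u2 \<and> E c u1 \<and> E c u2"
    and nonzero: "\<And>c u. c \<in> Y \<Longrightarrow> u \<in> X \<Longrightarrow> a c u \<noteq> 0"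
    and acyclic: "\<not> has_cycle_in E (X \<union> Y)"
  shows "\<exists>d. check_kernel E a X Y d \<and> (\<exists>v\<in>X. d v \<noteq> 0)"
  using assms(1-3) two_nbrs nonzero acyclic
proof (induction "card X" arbitrary: X Y rule: less_induct)
  case less
  note fin = less.prems(1,2) and two_nbrs = less.prems(4) and nonzero = less.prems(5)
    and acyclic = less.prems(6)
  obtain v where "v \<in> X \<union> Y"
    and leaf: "\<forall>u1\<in>X \<union> Y. \<forall>u2\<in>X \<union> Y. E v u1 \<longrightarrow> E v u2 \<longrightarrow> u1 = u2"
    using acyclic_has_leaf[of "X \<union> Y" E] less.prems irrefl by auto
  have "v \<in> X"
    using \<open>v \<in> X \<union> Y\<close> leaf two_nbrs by blast
  show ?case
  proof (cases "\<exists>c\<in>Y. E c v")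
    case False
    then have "check_kernel E a X Y (\<lambda>u. if u = v then 1 else 0)"
      using \<open>v \<in> X\<close> by (auto simp: check_kernel_def intro!: sum.neutral)
    then show ?thesis using \<open>v \<in> X\<close> by fastforce
  next
    case True
    then obtain c where "c \<in> Y" and "E c v" by blast
    have pendant: "c' = c" if "c' \<in> Y" and "E c' v" for c'
      using leaf sym that \<open>c \<in> Y\<close> \<open>E c v\<close> by blast
    have "\<exists>d. check_kernel E a (X - {v}) (Y - {c}) d \<and> (\<exists>w\<in>X - {v}. d w \<noteq> 0)"
    proof (rule less.hyps)
      show "card (X - {v}) < card X" using fin(1) \<open>v \<in> X\<close> by (rule card_Diff1_less)
      show "X - {v} \<noteq> {}" using two_nbrs[OF \<open>c \<in> Y\<close>] by blast
      show "\<exists>u1\<in>X - {v}. \<exists>u2\<in>X - {v}. u1 \<noteq> u2 \<and> E c' u1 \<and> E c' u2" if "c' \<in> Y - {c}" for c'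
        using two_nbrs[of c'] that pendant sym by blast
      show "\<not> has_cycle_in E (X - {v} \<union> (Y - {c}))"
        using acyclic has_cycle_in_mono by blast
      show "a c' u \<noteq> 0" if "c' \<in> Y - {c}" and "u \<in> X - {v}" for c' u
        using nonzero that by blast
    qed (use fin in auto)
    then obtain d w where ker: "check_kernel E a (X - {v}) (Y - {c}) d"
      and "w \<in> X - {v}" and "d w \<noteq> 0"
      by blast
    let ?d = "d(v := - (\<Sum>u | u \<in> X - {v} \<and> E c u. a c u * d u) / a c v)"
    have "check_kernel E a X Y ?d"
      using check_kernel_add_pendant[OF ker fin(1) \<open>v \<in> X\<close> \<open>E c v\<close> pendant]
        nonzero[OF \<open>c \<in> Y\<close> \<open>v \<in> X\<close>] by blast
    moreover have "?d w \<noteq> 0" using \<open>w \<in> X - {v}\<close> \<open>d w \<noteq> 0\<close> by simp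
    ultimately show ?thesis using \<open>w \<in> X - {v}\<close> by blast
  qed
qed

section \<open>Odd-set inequalities\<close>

definition parity_lhs :: "'a set \<Rightarrow> 'a set \<Rightarrow> ('a \<Rightarrow> real) \<Rightarrow> real" where
  "parity_lhs N V y = (\<Sum>i\<in>V. y i) - (\<Sum>i\<in>N - V. y i)"

definition tight_odd_set :: "'a set \<Rightarrow> ('a \<Rightarrow> real) \<Rightarrow> 'a set \<Rightarrow> bool" where
  "tight_odd_set N x V \<longleftrightarrow> V \<subseteq> N \<and> odd (card V) \<and> parity_lhs N V x = real (card V) - 1"

lemma parity_lhs_add_scaled:
  "parity_lhs N V (\<lambda>i. x i + t * d i) = parity_lhs N V x + t * parity_lhs N V d"
  unfolding parity_lhs_def by (simp add: sum.distrib sum_distrib_left algebra_simps)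

lemma parity_lhs_signed_sum:
  assumes "finite N" and "V \<subseteq> N"
  shows "parity_lhs N V y = (\<Sum>i\<in>N. if i \<in> V then y i else - y i)"
proof -
  have "N \<inter> {i. i \<in> V} = V" and "N \<inter> - {i. i \<in> V} = N - V" using assms(2) by auto
  then show ?thesis
    using assms(1) by (simp add: sum.If_cases parity_lhs_def sum_negf)
qed

text \<open>The l1-distance from x to the indicator vector of V: an odd set V satisfies its inequality
  iff this distance is at least 1, and is tight iff it equals 1.\<close>
lemma sum_abs_indicator_diff:
  assumes "finite N" and "V \<subseteq> N" and box: "\<forall>i\<in>N. 0 \<le> x i \<and> x i \<le> 1"
  shows "(\<Sum>i\<in>N. \<bar>of_bool (i \<in> V) - x i\<bar>) = real (card V) - parity_lhs N V x"
proof -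
  have "(\<Sum>i\<in>N. \<bar>of_bool (i \<in> V) - x i\<bar>) = (\<Sum>i\<in>N. if i \<in> V then 1 - x i else x i)"
    using box by (intro sum.cong) auto
  also have "\<dots> = (\<Sum>i\<in>V. 1 - x i) + (\<Sum>i\<in>N - V. x i)"
  proof -
    have "N \<inter> {i. i \<in> V} = V" and "N \<inter> - {i. i \<in> V} = N - V" using assms(2) by auto
    then show ?thesis using assms(1) by (simp add: sum.If_cases)
  qed
  finally show ?thesis by (simp add: parity_lhs_def sum_subtractf)
qed

lemma tight_odd_sets_eq:
  assumes "finite N" and box: "\<forall>i\<in>N. 0 \<le> x i \<and> x i \<le> 1"
    and V: "tight_odd_set N x V" and V': "tight_odd_set N x V'"
    and "i0 \<in> N" and "0 < x i0" and "x i0 < 1" and "i0 \<in> V \<longleftrightarrow> i0 \<in> V'"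
  shows "V = V'"
proof -
  have fin: "finite V" "finite V'"
    using V V' \<open>finite N\<close> by (auto simp: tight_odd_set_def intro: finite_subset)
  have dist: "(\<Sum>i\<in>N. \<bar>of_bool (i \<in> W) - x i\<bar>) = 1" if "tight_odd_set N x W" for W
    using sum_abs_indicator_diff[OF \<open>finite N\<close> _ box, of W] that
    by (simp add: tight_odd_set_def)
  have "N \<inter> {i. i \<in> V \<and> i \<notin> V'} = V - V'" and "N \<inter> {i. i \<in> V' \<and> i \<notin> V} = V' - V"
    using V V' by (auto simp: tight_odd_set_def)
  then have "real (card (V - V') + card (V' - V)) =
      (\<Sum>i\<in>N. of_bool (i \<in> V \<and> i \<notin> V') + of_bool (i \<in> V' \<and> i \<notin> V))"
    using \<open>finite N\<close> by (simp add: sum.distrib)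
  also have "\<dots> = (\<Sum>i\<in>N. \<bar>of_bool (i \<in> V) - of_bool (i \<in> V')\<bar>)"
    by (intro sum.cong) auto
  also have "\<dots> < (\<Sum>i\<in>N. \<bar>of_bool (i \<in> V) - x i\<bar> + \<bar>of_bool (i \<in> V') - x i\<bar>)"
    using \<open>finite N\<close>
  proof (rule sum_strict_mono_ex1)
    show "\<exists>i\<in>N. \<bar>of_bool (i \<in> V) - of_bool (i \<in> V') :: real\<bar> <
        \<bar>of_bool (i \<in> V) - x i\<bar> + \<bar>of_bool (i \<in> V') - x i\<bar>"
      using assms(5-8) by (intro bexI[of _ i0]) auto
  qed auto
  also have "\<dots> = 2" using dist[OF V] dist[OF V'] by (simp add: sum.distrib)
  finally have "card (V - V') + card (V' - V) < 2" by linarith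
  moreover have "even (card (V - V') + card (V' - V))"
  proof -
    have "card V = card (V - V') + card (V \<inter> V')" "card V' = card (V' - V) + card (V \<inter> V')"
      using fin by (metis card_Int_Diff inf_commute add.commute)+
    then show ?thesis using V V' by (auto simp: tight_odd_set_def)
  qed
  ultimately have "card (V - V') + card (V' - V) = 0" by presburger
  then have "V - V' = {}" and "V' - V = {}" using fin by auto
  then show ?thesis by blast
qed

lemma parity_ineqs_second_fractional:
  assumes "finite N" and box: "\<forall>i\<in>N. 0 \<le> x i \<and> x i \<le> 1"
    and ineqs: "\<forall>V. V \<subseteq> N \<and> odd (card V) \<longrightarrow> parity_lhs N V x \<le> real (card V) - 1"
    and "i0 \<in> N" and "0 < x i0" and "x i0 < 1"
  shows "\<exists>i\<in>N. i \<noteq> i0 \<and> 0 < x i \<and> x i < 1"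
proof (rule ccontr)
  assume "\<not> ?thesis"
  then have integral: "x i = 0 \<or> x i = 1" if "i \<in> N - {i0}" for i
    using box that by fastforce
  define I where "I = {i \<in> N - {i0}. x i = 1}"
  define V where "V = (if odd (card I) then I else insert i0 I)"
  have "finite I" and "i0 \<notin> I" using \<open>finite N\<close> by (auto simp: I_def)
  then have "odd (card V)" by (simp add: V_def)
  have "V \<subseteq> N" using \<open>i0 \<in> N\<close> by (auto simp: V_def I_def)
  have V_off_i0: "i \<in> V \<longleftrightarrow> x i = 1" if "i \<in> N - {i0}" for i
    using that by (auto simp: V_def I_def)
  have "(\<Sum>i\<in>N. \<bar>of_bool (i \<in> V) - x i\<bar>) =
      \<bar>of_bool (i0 \<in> V) - x i0\<bar> + (\<Sum>i\<in>N - {i0}. \<bar>of_bool (i \<in> V) - x i\<bar>)"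
    using \<open>finite N\<close> \<open>i0 \<in> N\<close> by (rule sum.remove)
  also have "(\<Sum>i\<in>N - {i0}. \<bar>of_bool (i \<in> V) - x i\<bar>) = 0"
  proof (rule sum.neutral, rule ballI)
    fix i assume "i \<in> N - {i0}"
    then show "\<bar>of_bool (i \<in> V) - x i\<bar> = 0" using integral V_off_i0 by auto
  qed
  also have "\<bar>of_bool (i0 \<in> V) - x i0\<bar> < 1"
    using \<open>0 < x i0\<close> \<open>x i0 < 1\<close> by auto
  finally have "real (card V) - parity_lhs N V x < 1"
    using sum_abs_indicator_diff[OF \<open>finite N\<close> \<open>V \<subseteq> N\<close> box] by simp
  moreover have "parity_lhs N V x \<le> real (card V) - 1"
    using ineqs \<open>V \<subseteq> N\<close> \<open>odd (card V)\<close> by blast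
  ultimately show False by linarith
qed

lemma tight_odd_set_parity_lhs_zero:
  assumes "finite N" and box: "\<forall>i\<in>N. 0 \<le> x i \<and> x i \<le> 1"
    and V: "tight_odd_set N x V" and V': "tight_odd_set N x V'"
    and supp: "\<forall>i\<in>N. d i \<noteq> 0 \<longrightarrow> 0 < x i \<and> x i < 1"
    and "parity_lhs N V' d = 0"
  shows "parity_lhs N V d = 0"
proof (cases "V = V'")
  case False
  have flip: "(if i \<in> V then d i else - d i) = - (if i \<in> V' then d i else - d i)" if "i \<in> N" for i
  proof (cases "d i = 0")
    case False
    then have "\<not> (i \<in> V \<longleftrightarrow> i \<in> V')"
      using tight_odd_sets_eq[OF \<open>finite N\<close> box V V' \<open>i \<in> N\<close>] supp \<open>i \<in> N\<close> \<open>V \<noteq> V'\<close> by blast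
    then show ?thesis by auto
  qed simp
  have "parity_lhs N V d = - parity_lhs N V' d"
  proof -
    have "parity_lhs N V d = (\<Sum>i\<in>N. - (if i \<in> V' then d i else - d i))"
      using V \<open>finite N\<close> flip by (simp add: tight_odd_set_def parity_lhs_signed_sum)
    also have "\<dots> = - parity_lhs N V' d"
      using V' \<open>finite N\<close> by (simp add: tight_odd_set_def parity_lhs_signed_sum sum_negf)
    finally show ?thesis .
  qed
  then show ?thesis using \<open>parity_lhs N V' d = 0\<close> by simp
qed (use assms in simp)

section \<open>Perturbing the LP optimum\<close>

lemma eventually_affine_nonneg:
  fixes s e :: real
  assumes "0 \<le> s" and "s = 0 \<Longrightarrow> e = 0"
  shows "eventually (\<lambda>t. 0 \<le> s + t * e) (at 0)"
proof (cases "s = 0")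
  case False
  have "((\<lambda>t. s + t * e) \<longlongrightarrow> s) (at 0)"
    by (auto intro!: tendsto_eq_intros)
  then have "eventually (\<lambda>t. 0 < s + t * e) (at 0)"
    using assms(1) False by (intro order_tendstoD) auto
  then show ?thesis by (rule eventually_mono) simp
qed (use assms in simp)

lemma finite_check_nbhd: "finite (check_nbhd n H j)"
  unfolding check_nbhd_def by auto

lemma fundamental_polytope_iff:
  "y \<in> fundamental_polytope m n H \<longleftrightarrow>
     (\<forall>i<n. 0 \<le> y i \<and> y i \<le> 1) \<and>
     (\<forall>j<m. \<forall>V. V \<subseteq> check_nbhd n H j \<and> odd (card V) \<longrightarrow>
        parity_lhs (check_nbhd n H j) V y \<le> real (card V) - 1)"
  unfolding fundamental_polytope_def parity_lhs_def by simp

lemma objective_add_scaled: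
  "objective n \<gamma> (\<lambda>i. x i + t * d i) = objective n \<gamma> x + t * objective n \<gamma> d"
  unfolding objective_def by (simp add: sum.distrib sum_distrib_left algebra_simps)

text \<open>Directions along which every constraint of the fundamental polytope that is active at x
  stays active: the box constraints at integral coordinates and the tight odd-set inequalities.\<close>
definition face_direction ::
  "nat \<Rightarrow> nat \<Rightarrow> (nat \<Rightarrow> nat \<Rightarrow> bool) \<Rightarrow> (nat \<Rightarrow> real) \<Rightarrow> (nat \<Rightarrow> real) \<Rightarrow> bool" where
  "face_direction m n H x d \<longleftrightarrow> (\<forall>i<n. d i \<noteq> 0 \<longrightarrow> 0 < x i \<and> x i < 1) \<and>
     (\<forall>j<m. \<forall>V. tight_odd_set (check_nbhd n H j) x V \<longrightarrow> parity_lhs (check_nbhd n H j) V d = 0)"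

lemma fundamental_polytope_perturb:
  assumes "x \<in> fundamental_polytope m n H" and "face_direction m n H x d"
  shows "eventually (\<lambda>t. (\<lambda>i. x i + t * d i) \<in> fundamental_polytope m n H) (at 0)"
proof -
  let ?N = "check_nbhd n H"
  have x_box: "\<forall>i<n. 0 \<le> x i \<and> x i \<le> 1"
    and x_ineqs: "\<forall>j<m. \<forall>V. V \<subseteq> ?N j \<and> odd (card V) \<longrightarrow> parity_lhs (?N j) V x \<le> real (card V) - 1"
    using assms(1) by (auto simp: fundamental_polytope_iff)
  have supp: "\<forall>i<n. d i \<noteq> 0 \<longrightarrow> 0 < x i \<and> x i < 1"
    and tight: "\<forall>j<m. \<forall>V. tight_odd_set (?N j) x V \<longrightarrow> parity_lhs (?N j) V d = 0"
    using assms(2) by (auto simp: face_direction_def)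
  have "eventually (\<lambda>t. \<forall>i\<in>{..<n}. 0 \<le> x i + t * d i \<and> 0 \<le> (1 - x i) + t * - d i) (at 0)"
    using x_box supp
    by (intro eventually_ball_finite ballI eventually_conj eventually_affine_nonneg) auto
  moreover have "eventually (\<lambda>t. \<forall>j\<in>{..<m}. \<forall>V\<in>{V. V \<subseteq> ?N j \<and> odd (card V)}.
      0 \<le> (real (card V) - 1 - parity_lhs (?N j) V x) + t * - parity_lhs (?N j) V d) (at 0)"
    using x_ineqs tight finite_check_nbhd
    by (intro eventually_ball_finite ballI eventually_affine_nonneg)
       (auto simp: tight_odd_set_def)
  ultimately show ?thesis
    by eventually_elim (auto simp: fundamental_polytope_iff parity_lhs_add_scaled algebra_simps)
qed

lemma unique_LP_optimum_face_direction_zero: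
  assumes "unique_LP_optimum m n H \<gamma> x" and "face_direction m n H x d"
  shows "\<forall>i<n. d i = 0"
proof -
  let ?P = "fundamental_polytope m n H" and ?x = "\<lambda>t i. x i + t * d i"
  have "x \<in> ?P" and opt: "\<And>y. y \<in> ?P \<Longrightarrow> objective n \<gamma> x \<le> objective n \<gamma> y"
    and uniq: "\<And>y. y \<in> ?P \<Longrightarrow> objective n \<gamma> y = objective n \<gamma> x \<Longrightarrow> \<forall>i<n. y i = x i"
    using assms(1) by (auto simp: unique_LP_optimum_def)
  obtain \<epsilon> :: real where "\<epsilon> > 0" and feasible: "\<And>t. t \<noteq> 0 \<Longrightarrow> \<bar>t\<bar> < \<epsilon> \<Longrightarrow> ?x t \<in> ?P"
    using fundamental_polytope_perturb[OF \<open>x \<in> ?P\<close> assms(2)]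
    by (auto simp: eventually_at dist_real_def)
  let ?t = "\<epsilon> / 2"
  have "?x ?t \<in> ?P" and "?x (- ?t) \<in> ?P" by (rule feasible; use \<open>\<epsilon> > 0\<close> in simp)+
  then have "objective n \<gamma> x \<le> objective n \<gamma> x + ?t * objective n \<gamma> d"
    and "objective n \<gamma> x \<le> objective n \<gamma> x + - ?t * objective n \<gamma> d"
    by (auto dest!: opt simp only: objective_add_scaled)
  then have "objective n \<gamma> d = 0" using \<open>\<epsilon> > 0\<close>
    by (simp add: mult_le_0_iff zero_le_mult_iff)
  then have "objective n \<gamma> (?x ?t) = objective n \<gamma> x"
    by (simp only: objective_add_scaled mult_zero_right add_0_right)
  then have "\<forall>i<n. ?x ?t i = x i" using uniq[OF \<open>?x ?t \<in> ?P\<close>] by blast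
  then show ?thesis using \<open>\<epsilon> > 0\<close> by simp
qed

section \<open>Clusters of the fractional subgraph\<close>

lemma frac_adj_sym: "frac_adj m n H x u v \<Longrightarrow> frac_adj m n H x v u"
  unfolding frac_adj_def tanner_adj_def by blast

lemma frac_adj_irrefl: "\<not> frac_adj m n H x u u"
  unfolding frac_adj_def tanner_adj_def by auto

lemma frac_adj_check_var:
  "frac_adj m n H x (Inr j) (Inl i) \<longleftrightarrow> j < m \<and> i \<in> check_nbhd n H j \<and> 0 < x i \<and> x i < 1"
  unfolding frac_adj_def tanner_adj_def frac_vertices_def check_nbhd_def by auto

lemma finite_frac_vertices: "finite (frac_vertices m n H x)"
proof (rule finite_subset)
  show "frac_vertices m n H x \<subseteq> Inl ` {..<n} \<union> Inr ` {..<m}"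
    unfolding frac_vertices_def by auto
qed simp

lemma graph_components_subset: "C \<in> graph_components Vs E \<Longrightarrow> C \<subseteq> Vs"
  unfolding graph_components_def by blast

lemma graph_components_nonempty: "C \<in> graph_components Vs E \<Longrightarrow> C \<noteq> {}"
  unfolding graph_components_def by blast

lemma graph_components_closed:
  assumes "C \<in> graph_components Vs E" and "v \<in> C" and "E v w" and "w \<in> Vs"
  shows "w \<in> C"
proof -
  obtain u where C: "C = {v \<in> Vs. E\<^sup>*\<^sup>* u v}"
    using assms(1) unfolding graph_components_def by blast
  then show ?thesis using assms(2-4) by (auto intro: rtranclp.rtrancl_into_rtrancl)
qed

text \<open>Arbitrary (by SOME) when check j has no tight odd set; it is only used where one exists.\<close>
definition chosen_tight_set :: "nat \<Rightarrow> (nat \<Rightarrow> nat \<Rightarrow> bool) \<Rightarrow> (nat \<Rightarrow> real) \<Rightarrow> nat \<Rightarrow> nat set" where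
  "chosen_tight_set n H x j = (SOME V. tight_odd_set (check_nbhd n H j) x V)"

definition tight_signs :: "nat \<Rightarrow> (nat \<Rightarrow> nat \<Rightarrow> bool) \<Rightarrow> (nat \<Rightarrow> real) \<Rightarrow> tnode \<Rightarrow> tnode \<Rightarrow> real" where
  "tight_signs n H x c u = (if projl u \<in> chosen_tight_set n H x (projr c) then 1 else -1)"

context
  fixes m n H x C
  assumes C: "C \<in> graph_components (frac_vertices m n H x) (frac_adj m n H x)"
begin

lemma frac_cluster_closed: "v \<in> C \<Longrightarrow> frac_adj m n H x v w \<Longrightarrow> w \<in> C"
  using graph_components_closed[OF C] by (auto simp: frac_adj_def)

lemma frac_cluster_var: "Inl i \<in> C \<Longrightarrow> i < n \<and> 0 < x i \<and> x i < 1"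
  using graph_components_subset[OF C] by (auto simp: frac_vertices_def)

lemma frac_cluster_check_nbhd:
  assumes "Inl i \<in> C" and "j < m" and "i \<in> check_nbhd n H j"
  shows "Inr j \<in> C"
proof -
  have "frac_adj m n H x (Inr j) (Inl i)"
    using assms frac_cluster_var frac_adj_check_var by blast
  then show ?thesis using assms(1) frac_cluster_closed frac_adj_sym by blast
qed

lemma frac_cluster_check:
  assumes "Inr j \<in> C"
  obtains i where "j < m" and "i \<in> check_nbhd n H j" and "Inl i \<in> C"
proof -
  have "Inr j \<in> frac_vertices m n H x" using assms graph_components_subset[OF C] by blast
  then obtain i where "j < m" "i \<in> check_nbhd n H j" "0 < x i" "x i < 1"
    by (auto simp: frac_vertices_def check_nbhd_def)
  then show thesis
    using that frac_cluster_closed[OF assms] frac_adj_check_var by blast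
qed

lemma frac_cluster_has_var: "\<exists>i. Inl i \<in> C"
proof -
  obtain v where "v \<in> C" using graph_components_nonempty[OF C] by blast
  then show ?thesis by (cases v) (auto elim: frac_cluster_check)
qed

lemma frac_cluster_check_two_vars:
  assumes "x \<in> fundamental_polytope m n H" and "Inr j \<in> C"
  obtains i1 i2 where "i1 \<noteq> i2" and "Inl i1 \<in> C" and "Inl i2 \<in> C"
    and "frac_adj m n H x (Inr j) (Inl i1)" and "frac_adj m n H x (Inr j) (Inl i2)"
proof -
  let ?N = "check_nbhd n H j"
  obtain i1 where "j < m" and "i1 \<in> ?N" and "Inl i1 \<in> C"
    using assms(2) by (rule frac_cluster_check)
  have box: "\<forall>i\<in>?N. 0 \<le> x i \<and> x i \<le> 1"
    using assms(1) by (auto simp: fundamental_polytope_iff check_nbhd_def)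
  have ineqs: "\<forall>V. V \<subseteq> ?N \<and> odd (card V) \<longrightarrow> parity_lhs ?N V x \<le> real (card V) - 1"
    using assms(1) \<open>j < m\<close> by (simp add: fundamental_polytope_iff)
  obtain i2 where "i2 \<in> ?N" and "i2 \<noteq> i1" and "0 < x i2" and "x i2 < 1"
    using parity_ineqs_second_fractional[OF finite_check_nbhd box ineqs \<open>i1 \<in> ?N\<close>]
      frac_cluster_var[OF \<open>Inl i1 \<in> C\<close>] by blast
  then have "frac_adj m n H x (Inr j) (Inl i2)" using \<open>j < m\<close> frac_adj_check_var by blast
  moreover have "frac_adj m n H x (Inr j) (Inl i1)"
    using \<open>j < m\<close> \<open>i1 \<in> ?N\<close> frac_cluster_var[OF \<open>Inl i1 \<in> C\<close>] frac_adj_check_var by blast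
  ultimately show thesis
    using that \<open>i2 \<noteq> i1\<close> \<open>Inl i1 \<in> C\<close> frac_cluster_closed[OF assms(2)] by blast
qed

lemma frac_cluster_kernel_sum:
  assumes "Inr j \<in> C" and "V \<subseteq> check_nbhd n H j"
    and supp: "\<forall>v. v \<notin> C \<inter> range Inl \<longrightarrow> d v = 0"
  shows "(\<Sum>u | u \<in> C \<inter> range Inl \<and> frac_adj m n H x (Inr j) u.
            (if projl u \<in> V then 1 else -1) * d u) = parity_lhs (check_nbhd n H j) V (\<lambda>i. d (Inl i))"
proof -
  let ?N = "check_nbhd n H j"
  obtain i where "j < m" using assms(1) by (rule frac_cluster_check)
  then have "{u. u \<in> C \<inter> range Inl \<and> frac_adj m n H x (Inr j) u} = Inl ` {i \<in> ?N. Inl i \<in> C}"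
    using frac_adj_check_var frac_cluster_var by auto
  then have "(\<Sum>u | u \<in> C \<inter> range Inl \<and> frac_adj m n H x (Inr j) u.
        (if projl u \<in> V then 1 else -1) * d u) = (\<Sum>i | i \<in> ?N \<and> Inl i \<in> C. (if i \<in> V then 1 else -1) * d (Inl i))"
    by (simp add: sum.reindex)
  also have "\<dots> = (\<Sum>i\<in>?N. if i \<in> V then d (Inl i) else - d (Inl i))"
    using supp by (intro sum.mono_neutral_cong_left finite_check_nbhd) auto
  also have "\<dots> = parity_lhs ?N V (\<lambda>i. d (Inl i))"
    using assms(2) by (simp add: parity_lhs_signed_sum finite_check_nbhd)
  finally show ?thesis .
qed

lemma frac_cluster_direction_tight:
  assumes "x \<in> fundamental_polytope m n H"
    and supp: "\<And>i. d i \<noteq> 0 \<Longrightarrow> Inl i \<in> C"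
    and balanced: "\<And>j. Inr j \<in> C \<Longrightarrow> tight_odd_set (check_nbhd n H j) x (chosen_tight_set n H x j) \<Longrightarrow>
                     parity_lhs (check_nbhd n H j) (chosen_tight_set n H x j) d = 0"
    and "j < m" and V: "tight_odd_set (check_nbhd n H j) x V"
  shows "parity_lhs (check_nbhd n H j) V d = 0"
proof (cases "Inr j \<in> C")
  case True
  let ?N = "check_nbhd n H j"
  have "tight_odd_set ?N x (chosen_tight_set n H x j)"
    unfolding chosen_tight_set_def using V by (rule someI)
  moreover have "\<forall>i\<in>?N. 0 \<le> x i \<and> x i \<le> 1"
    using assms(1) by (auto simp: fundamental_polytope_iff check_nbhd_def)
  moreover have "\<forall>i\<in>?N. d i \<noteq> 0 \<longrightarrow> 0 < x i \<and> x i < 1"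
    using supp frac_cluster_var by blast
  ultimately show ?thesis
    using tight_odd_set_parity_lhs_zero[OF finite_check_nbhd _ V] balanced[OF True] by blast
next
  case False
  then have "\<forall>i\<in>check_nbhd n H j. d i = 0"
    using supp frac_cluster_check_nbhd[OF _ \<open>j < m\<close>] by blast
  then show ?thesis
    using V by (simp add: parity_lhs_def tight_odd_set_def subset_iff)
qed

lemma frac_cluster_kernel_face_direction:
  assumes "x \<in> fundamental_polytope m n H"
    and ker: "check_kernel (frac_adj m n H x) (tight_signs n H x) (C \<inter> range Inl) (C \<inter> range Inr) d"
  shows "face_direction m n H x (\<lambda>i. d (Inl i))"
proof -
  have supp: "Inl i \<in> C" if "d (Inl i) \<noteq> 0" for i
    using ker that by (auto simp: check_kernel_def)
  have "parity_lhs (check_nbhd n H j) (chosen_tight_set n H x j) (\<lambda>i. d (Inl i)) = 0"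
    if "Inr j \<in> C" and "tight_odd_set (check_nbhd n H j) x (chosen_tight_set n H x j)" for j
  proof -
    have "0 = (\<Sum>u | u \<in> C \<inter> range Inl \<and> frac_adj m n H x (Inr j) u. tight_signs n H x (Inr j) u * d u)"
      using ker \<open>Inr j \<in> C\<close> by (simp add: check_kernel_def)
    also have "\<dots> = parity_lhs (check_nbhd n H j) (chosen_tight_set n H x j) (\<lambda>i. d (Inl i))"
      using frac_cluster_kernel_sum[OF \<open>Inr j \<in> C\<close>] ker that(2)
      by (simp add: check_kernel_def tight_odd_set_def tight_signs_def)
    finally show ?thesis by simp
  qed
  then show ?thesis
    using supp frac_cluster_var frac_cluster_direction_tight[OF assms(1) supp]
    by (auto simp: face_direction_def)
qed

lemma acyclic_frac_cluster_kernel: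
  assumes "x \<in> fundamental_polytope m n H" and acyclic: "\<not> has_cycle_in (frac_adj m n H x) C"
  obtains d v where
    "check_kernel (frac_adj m n H x) (tight_signs n H x) (C \<inter> range Inl) (C \<inter> range Inr) d"
    and "v \<in> C \<inter> range Inl" and "d v \<noteq> 0"
proof -
  let ?E = "frac_adj m n H x" and ?X = "C \<inter> range Inl" and ?Y = "C \<inter> range Inr"
  have "finite C"
    using graph_components_subset[OF C] finite_frac_vertices by (rule finite_subset)
  have "?X \<noteq> {}" using frac_cluster_has_var by blast
  have two_nbrs: "\<exists>u1\<in>?X. \<exists>u2\<in>?X. u1 \<noteq> u2 \<and> ?E c u1 \<and> ?E c u2" if c: "c \<in> ?Y" for c
  proof -
    obtain j where "c = Inr j" and "Inr j \<in> C" using c by blast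
    then obtain i1 i2 where "i1 \<noteq> i2" and "Inl i1 \<in> C" and "Inl i2 \<in> C"
      and "?E c (Inl i1)" and "?E c (Inl i2)"
      using frac_cluster_check_two_vars[OF assms(1)] by metis
    then show ?thesis by (intro bexI[of _ "Inl i1"] bexI[of _ "Inl i2"]) auto
  qed
  have "?X \<union> ?Y = C" using UNIV_sum by blast
  have "\<exists>d. check_kernel ?E (tight_signs n H x) ?X ?Y d \<and> (\<exists>v\<in>?X. d v \<noteq> 0)"
  proof (rule forest_check_kernel_nontrivial[OF _ _ \<open>?X \<noteq> {}\<close> frac_adj_sym frac_adj_irrefl two_nbrs])
    show "finite ?X" and "finite ?Y" using \<open>finite C\<close> by auto
    show "tight_signs n H x c u \<noteq> 0" for c u by (simp add: tight_signs_def)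
    show "\<not> has_cycle_in ?E (?X \<union> ?Y)" using acyclic \<open>?X \<union> ?Y = C\<close> by simp
  qed
  then show thesis using that by blast
qed

end

theorem theorem4:
  fixes m n :: nat and H :: "nat \<Rightarrow> nat \<Rightarrow> bool"
    and \<gamma> x :: "nat \<Rightarrow> real"
  assumes "unique_LP_optimum m n H \<gamma> x"
  shows "\<forall>C \<in> graph_components (frac_vertices m n H x) (frac_adj m n H x).
           has_cycle_in (frac_adj m n H x) C"
proof (rule ballI, rule ccontr)
  fix C assume C: "C \<in> graph_components (frac_vertices m n H x) (frac_adj m n H x)"
    and acyclic: "\<not> has_cycle_in (frac_adj m n H x) C"
  have "x \<in> fundamental_polytope m n H"
    using assms by (simp add: unique_LP_optimum_def)
  then obtain d v
    where ker: "check_kernel (frac_adj m n H x) (tight_signs n H x) (C \<inter> range Inl) (C \<inter> range Inr) d"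
      and "v \<in> C \<inter> range Inl" and "d v \<noteq> 0"
    using acyclic_frac_cluster_kernel[OF C _ acyclic] by blast
  then obtain i where "v = Inl i" and "i < n" using frac_cluster_var[OF C] by blast
  moreover have "\<forall>i<n. d (Inl i) = 0"
    using unique_LP_optimum_face_direction_zero[OF assms]
      frac_cluster_kernel_face_direction[OF C \<open>x \<in> fundamental_polytope m n H\<close> ker] by blast
  ultimately show False using \<open>d v \<noteq> 0\<close> by simp
qed

end
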